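(* Consider the system $x(t+1)=x(t)-L(t)x(t)$ with $\mathbf{1}^*\mathbb{E}(L(t))=0$. Let $a^{r}_{\max}>0$ and $\alpha>0$ be constants such that almost surely $\sum_{j\ne i}a_{ij}(t)\le a^{r}_{\max}$ and $a_{ii}(t)\ge\alpha$ for all $i\in I$. Suppose that $a_{ij}(t)$ and $a_{kl}(t)$ are uncorrelated whenever $i\ne k$. Then $$\mathbb{E}[L(t)^*\mathbf{1}\mathbf{1}^*L(t)]\le\gamma\,\mathbb{E}[L(t)+L(t)^*-L(t)^*L(t)]\quad\text{with }\gamma=\frac{a^{r}_{\max}}{\alpha},$$ and consequently $\mathbb{E}[(\bar x(t)-\bar x(0))^2]\le\frac{\gamma}{N+\gamma}V(x(0))$ for all $t\ge0$.
   Context: Let $I$ be a finite set of $N$ nodes. For each $t\in\mathbb{Z}_{\ge0}$ let $A(t)=(a_{ij}(t))_{i,j\in I}$ be a random matrix with $a_{ij}(t)\ge 0$ and $\sum_{\ell\in I}a_{i\ell}(t)=1$ for all $i$; the matrices $A(t)$ are i.i.d. in $t$. $L(t)$ is the Laplacian: $L_{ij}(t)=-a_{ij}(t)$ for $i\ne j$, $L_{ii}(t)=\sum_{j\ne i}a_{ij}(t)$. $x(0)\in\mathbb{R}^I$ is deterministic. $\mathbf{1}$ is the all-ones vector, $M^*$ the transpose; for $y\in\mathbb{R}^I$, $\bar y=\frac1N\sum_i y_i$, $V(y)=\frac1N\sum_i(y_i-\bar y)^2$. For square matrices, $A\le B$ means $A-B$ is negative semidefinite. *)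

theory Defs
  imports "HOL-Probability.Probability"
begin

definition lap :: "real^'n^'n \<Rightarrow> real^'n^'n" where
  "lap a = (\<chi> i j. if i = j then (\<Sum>k\<in>UNIV - {i}. a $ i $ k) else - (a $ i $ j))"

definition ones :: "real^'n" where
  "ones = (\<chi> i. 1)"

definition ones_outer :: "real^'n^'n" where
  "ones_outer = (\<chi> i j. 1)"

definition neg_semidef :: "real^'n^'n \<Rightarrow> bool" where
  "neg_semidef P \<longleftrightarrow> (\<forall>y::real^'n. y \<bullet> (P *v y) \<le> 0)"

definition loewner_le :: "real^'n^'n \<Rightarrow> real^'n^'n \<Rightarrow> bool" where
  "loewner_le P Q \<longleftrightarrow> neg_semidef (P - Q)"

definition avg :: "real^'n \<Rightarrow> real" where
  "avg y = (\<Sum>i\<in>UNIV. y $ i) / real CARD('n)"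

definition Var :: "real^'n \<Rightarrow> real" where
  "Var y = (\<Sum>i\<in>UNIV. (y $ i - avg y)^2) / real CARD('n)"

primrec traj :: "(nat \<Rightarrow> 'a \<Rightarrow> real^'n^'n) \<Rightarrow> real^'n \<Rightarrow> nat \<Rightarrow> 'a \<Rightarrow> real^'n" where
  "traj A x0 0 \<omega> = x0"
| "traj A x0 (Suc t) \<omega> = traj A x0 t \<omega> - lap (A t \<omega>) *v traj A x0 t \<omega>"

end

theory Submission imports Defs begin

(* Fix t and a vector y and write X_i = (L y)_i = sum_j a_ij (y_i - y_j); gamma = armax/alpha.
   (1) Row inequality (deterministic): for a row w of an admissible matrix, X_i^2 is at
       most gamma times the variance of y under the weights w (Cauchy-Schwarz).
   (2) Rows are uncorrelated and E[1^* L] = 0, so E[(sum_i X_i)^2] <= sum_i E[X_i^2].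
   (3) Summing (1) over i, unit column sums of E[A] give
         E[(1^* L y)^2] <= gamma * E[|y|^2 - |y - L y|^2],
       which is the claimed Loewner inequality evaluated at y.
   (4) So W(y) = (1^*y - c)^2 + gamma |y|^2 + kappa (1^*y - c) does not grow in expectation
       in one step; as A(t) is independent of the past, E[W(x(t))] <= W(x(0)).  With
       c = 1^*x(0), kappa = -2 c gamma / N and Cauchy-Schwarz this yields the bound
       gamma/(N+gamma) V(x(0)) on E[(avg x(t) - avg x(0))^2]. *)

lemma vec_borel_measurableI:
  fixes f :: "'a \<Rightarrow> 'b::euclidean_space^'n"
  assumes "\<And>i. (\<lambda>x. f x $ i) \<in> borel_measurable M"
  shows "f \<in> borel_measurable M"
proof -
  have "(\<lambda>x. f x \<bullet> b) \<in> borel_measurable M" if "b \<in> Basis" for b :: "'b^'n"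
  proof -
    from that obtain i u where b: "b = axis i u" "u \<in> Basis" unfolding Basis_vec_def by blast
    have "(\<lambda>x. f x $ i \<bullet> u) \<in> borel_measurable M"
      by (intro borel_measurable_inner assms borel_measurable_const)
    then show ?thesis by (simp add: b inner_axis)
  qed
  then show ?thesis by (subst borel_measurable_euclidean_space) blast
qed

lemma mat_borel_measurableI:
  fixes f :: "'a \<Rightarrow> real^'n^'m"
  assumes "\<And>i j. (\<lambda>x. f x $ i $ j) \<in> borel_measurable M"
  shows "f \<in> borel_measurable M"
  by (rule vec_borel_measurableI, rule vec_borel_measurableI, rule assms)

lemma measurable_vec_nth'[measurable (raw)]:
  fixes f :: "'a \<Rightarrow> 'b::euclidean_space^'n"
  shows "f \<in> borel_measurable M \<Longrightarrow> (\<lambda>x. f x $ i) \<in> borel_measurable M"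
  by (rule measurable_compose[of f M borel])
     (auto intro!: borel_measurable_continuous_onI linear_continuous_on bounded_linear_vec_nth)

lemma measurable_matrix_mult[measurable (raw)]:
  fixes f :: "'a \<Rightarrow> real^'n^'m" and g :: "'a \<Rightarrow> real^'k^'n"
  shows "f \<in> borel_measurable M \<Longrightarrow> g \<in> borel_measurable M \<Longrightarrow> (\<lambda>x. f x ** g x) \<in> borel_measurable M"
  by (rule mat_borel_measurableI) (simp add: matrix_matrix_mult_def)

lemma measurable_matrix_vector_mult[measurable (raw)]:
  fixes f :: "'a \<Rightarrow> real^'n^'m" and g :: "'a \<Rightarrow> real^'n"
  shows "f \<in> borel_measurable M \<Longrightarrow> g \<in> borel_measurable M \<Longrightarrow> (\<lambda>x. f x *v g x) \<in> borel_measurable M"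
  by (rule vec_borel_measurableI) (simp add: matrix_vector_mult_def)

lemma measurable_transpose[measurable (raw)]:
  fixes f :: "'a \<Rightarrow> real^'n^'m"
  shows "f \<in> borel_measurable M \<Longrightarrow> (\<lambda>x. transpose (f x)) \<in> borel_measurable M"
  by (rule mat_borel_measurableI) (simp add: transpose_def)

lemma measurable_lap[measurable (raw)]:
  fixes f :: "'a \<Rightarrow> real^'n^'n"
  shows "f \<in> borel_measurable M \<Longrightarrow> (\<lambda>x. lap (f x)) \<in> borel_measurable M"
  by (rule mat_borel_measurableI) (simp add: lap_def)

lemma lap_mult_vec:
  fixes a :: "real^'n^'n" and i :: 'n
  shows "(lap a *v y) $ i = (\<Sum>j\<in>UNIV. a $ i $ j * (y $ i - y $ j))"
proof -
  have split: "sum f UNIV = f i + sum f (UNIV - {i})" for f :: "'n \<Rightarrow> real"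
    by (simp add: sum.remove)
  show ?thesis
    by (simp add: matrix_vector_mult_def lap_def, subst (1 2) split)
       (simp add: sum_distrib_right right_diff_distrib sum_subtractf sum_negf)
qed

lemma averaging_step:
  fixes a :: "real^'n^'n"
  assumes "\<forall>i. (\<Sum>j\<in>UNIV. a $ i $ j) = 1"
  shows "(y - lap a *v y) $ i = (\<Sum>j\<in>UNIV. a $ i $ j * y $ j)"
  using assms by (simp add: lap_mult_vec right_diff_distrib sum_subtractf flip: sum_distrib_right)

lemma lap_column_sum:
  fixes a :: "real^'n^'n"
  assumes "\<forall>i. (\<Sum>j\<in>UNIV. a $ i $ j) = 1"
  shows "(\<Sum>i\<in>UNIV. lap a $ i $ j) = 1 - (\<Sum>i\<in>UNIV. a $ i $ j)"
proof -
  have split: "sum f UNIV = f j + sum f (UNIV - {j})" for f :: "'n \<Rightarrow> real"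
    by (simp add: sum.remove)
  have "(\<Sum>i\<in>UNIV. lap a $ i $ j) = (\<Sum>k\<in>UNIV - {j}. a $ j $ k) - (\<Sum>i\<in>UNIV - {j}. a $ i $ j)"
    by (subst split) (simp add: lap_def sum_negf)
  also have "\<dots> = 1 - (\<Sum>i\<in>UNIV. a $ i $ j)"
    using split[of "\<lambda>k. a $ j $ k"] split[of "\<lambda>i. a $ i $ j"] assms by simp
  finally show ?thesis .
qed

lemma inner_vector_matrix: "(y::real^'n) \<bullet> (z v* L) = z \<bullet> (L *v y)"
  by (metis dot_lmul_matrix inner_commute)

lemma inner_transpose: "(y::real^'n) \<bullet> (transpose L *v z) = (L *v y) \<bullet> z"
  by (simp add: inner_vector_matrix inner_commute)

lemma quad_form_ones_outer:
  fixes L :: "real^'n^'n"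
  shows "(y::real^'n) \<bullet> ((transpose L ** ones_outer ** L) *v y) = (\<Sum>i\<in>UNIV. (L *v y) $ i)^2"
proof -
  have assoc: "(transpose L ** ones_outer ** L) *v y = transpose L *v (ones_outer *v (L *v y))"
    by (simp only: matrix_vector_mul_assoc matrix_mul_assoc)
  have ones: "ones_outer *v v = (\<chi> i. \<Sum>j\<in>UNIV. v $ j)" for v :: "real^'n"
    by (simp add: ones_outer_def matrix_vector_mult_def)
  show ?thesis
    by (simp only: assoc ones inner_transpose)
       (simp add: inner_vec_def power2_eq_square flip: sum_distrib_right)
qed

lemma quad_form_contraction:
  "(y::real^'n) \<bullet> ((L + transpose L - transpose L ** L) *v y) = y \<bullet> y - (y - L *v y) \<bullet> (y - L *v y)"
  by (simp add: algebra_simps inner_vector_matrix inner_diff_left inner_diff_right inner_add_right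
      flip: matrix_vector_mul_assoc) (simp add: inner_commute)

lemma weighted_Cauchy_Schwarz:
  fixes w e :: "'i \<Rightarrow> real"
  assumes "\<And>j. j \<in> S \<Longrightarrow> 0 \<le> w j"
  shows "(\<Sum>j\<in>S. w j * e j)^2 \<le> (\<Sum>j\<in>S. w j) * (\<Sum>j\<in>S. w j * (e j)^2)"
proof -
  have "(\<Sum>j\<in>S. w j * e j) = (\<Sum>j\<in>S. sqrt (w j) * (sqrt (w j) * e j))"
    using assms by (intro sum.cong) (auto simp flip: mult.assoc)
  also have "(\<dots>)^2 \<le> (\<Sum>j\<in>S. (sqrt (w j))^2) * (\<Sum>j\<in>S. (sqrt (w j) * e j)^2)"
    by (rule Cauchy_Schwarz_ineq_sum)
  also have "\<dots> = (\<Sum>j\<in>S. w j) * (\<Sum>j\<in>S. w j * (e j)^2)"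
    using assms by (simp add: power_mult_distrib)
  finally show ?thesis .
qed

lemma weighted_variance_eq:
  fixes w y :: "'i::finite \<Rightarrow> real"
  assumes "sum w UNIV = 1"
  shows "(\<Sum>j\<in>UNIV. w j * (y j - (\<Sum>k\<in>UNIV. w k * y k))^2)
       = (\<Sum>j\<in>UNIV. w j * (y j)^2) - (\<Sum>j\<in>UNIV. w j * y j)^2"
proof -
  define m where "m = (\<Sum>j\<in>UNIV. w j * y j)"
  have "(\<Sum>j\<in>UNIV. w j * (y j - m)^2) = (\<Sum>j\<in>UNIV. w j * (y j)^2 - 2 * m * (w j * y j) + m^2 * w j)"
    by (intro sum.cong) (auto simp: power2_eq_square algebra_simps)
  also have "\<dots> = (\<Sum>j\<in>UNIV. w j * (y j)^2) - 2 * m * m + m^2 * 1"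
    by (simp add: sum.distrib sum_subtractf m_def flip: sum_distrib_left assms)
  finally show ?thesis by (simp add: m_def power2_eq_square)
qed

text \<open>Deviation of one coordinate from the weighted mean: since the deviations average
  to zero, w_i (y_i - m)^2 is controlled by the off-diagonal mass 1 - w_i times the
  weighted variance.\<close>

lemma coordinate_deviation_bound:
  fixes w y :: "'i::finite \<Rightarrow> real"
  assumes w0: "\<And>j. 0 \<le> w j" and w1: "sum w UNIV = 1"
  defines "m \<equiv> \<Sum>j\<in>UNIV. w j * y j"
  shows "w i * (y i - m)^2 \<le> sum w (UNIV - {i}) * (\<Sum>j\<in>UNIV. w j * (y j - m)^2)"
proof -
  define e where "e j = y j - m" for j
  define s where "s = sum w (UNIV - {i})"
  define R where "R = (\<Sum>j\<in>UNIV - {i}. w j * (e j)^2)"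
  have split: "sum f UNIV = f i + sum f (UNIV - {i})" for f :: "'i \<Rightarrow> real"
    by (simp add: sum.remove)
  have "(\<Sum>j\<in>UNIV. w j * e j) = 0"
    by (simp add: e_def m_def right_diff_distrib sum_subtractf flip: sum_distrib_right) (simp add: w1)
  then have rest: "(\<Sum>j\<in>UNIV - {i}. w j * e j) = - (w i * e i)"
    using split[of "\<lambda>j. w j * e j"] by simp
  have cs: "(w i * e i)^2 \<le> s * R"
    using weighted_Cauchy_Schwarz[of "UNIV - {i}" w e] w0 rest by (simp add: s_def R_def)
  have "w i * (e i)^2 = w i * (e i)^2 * (s + w i)"
    using split[of w] w1 by (simp add: s_def)
  also have "\<dots> = s * (w i * (e i)^2) + (w i * e i)^2" by (simp add: algebra_simps power2_eq_square)
  also have "\<dots> \<le> s * (w i * (e i)^2 + R)" using cs by (simp add: algebra_simps)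
  also have "w i * (e i)^2 + R = (\<Sum>j\<in>UNIV. w j * (e j)^2)"
    using split[of "\<lambda>j. w j * (e j)^2"] by (simp add: R_def)
  finally show ?thesis by (simp add: e_def s_def)
qed

lemma row_inequality:
  fixes w y :: "'i::finite \<Rightarrow> real"
  assumes w0: "\<And>j. 0 \<le> w j" and w1: "sum w UNIV = 1" and wr: "sum w (UNIV - {i}) \<le> r"
    and wa: "al \<le> w i" and al: "0 < al"
  shows "(\<Sum>j\<in>UNIV. w j * (y i - y j))^2
      \<le> (r/al) * ((\<Sum>j\<in>UNIV. w j * (y j)^2) - (\<Sum>j\<in>UNIV. w j * y j)^2)"
proof -
  define m where "m = (\<Sum>j\<in>UNIV. w j * y j)"
  define V where "V = (\<Sum>j\<in>UNIV. w j * (y j - m)^2)"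
  have diff: "(\<Sum>j\<in>UNIV. w j * (y i - y j)) = y i - m"
    by (simp add: m_def right_diff_distrib sum_subtractf flip: sum_distrib_right) (simp add: w1)
  have V0: "0 \<le> V" unfolding V_def by (intro sum_nonneg mult_nonneg_nonneg w0) auto
  have "al * (y i - m)^2 \<le> w i * (y i - m)^2" using wa by (intro mult_right_mono) auto
  also have "\<dots> \<le> sum w (UNIV - {i}) * V"
    unfolding V_def m_def by (rule coordinate_deviation_bound[OF w0 w1])
  also have "\<dots> \<le> r * V" using wr V0 by (intro mult_right_mono)
  finally have "(y i - m)^2 \<le> (r/al) * V" using al by (simp add: field_simps)
  then show ?thesis
    by (simp add: diff V_def m_def weighted_variance_eq[OF w1])
qed

lemma integral_entry:
  fixes F :: "'a \<Rightarrow> real^'n^'m"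
  assumes "integrable M F"
  shows "integral\<^sup>L M F $ i $ j = integral\<^sup>L M (\<lambda>\<omega>. F \<omega> $ i $ j)"
proof -
  have row: "integrable M (\<lambda>\<omega>. F \<omega> $ i)"
    by (rule integrable_bounded_linear[OF bounded_linear_vec_nth assms])
  have "integral\<^sup>L M F $ i = integral\<^sup>L M (\<lambda>\<omega>. F \<omega> $ i)"
    by (rule integral_bounded_linear[OF bounded_linear_vec_nth assms, symmetric])
  also have "\<dots> $ j = integral\<^sup>L M (\<lambda>\<omega>. F \<omega> $ i $ j)"
    by (rule integral_bounded_linear[OF bounded_linear_vec_nth row, symmetric])
  finally show ?thesis .
qed

lemma integral_quadratic_form:
  fixes F :: "'a \<Rightarrow> real^'n^'n"
  assumes F: "integrable M F"
  shows "y \<bullet> (integral\<^sup>L M F *v y) = integral\<^sup>L M (\<lambda>\<omega>. y \<bullet> (F \<omega> *v y))"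
proof -
  have entry: "integrable M (\<lambda>\<omega>. F \<omega> $ i $ j)" for i j
    by (rule integrable_bounded_linear[OF bounded_linear_vec_nth
          integrable_bounded_linear[OF bounded_linear_vec_nth F]])
  have "y \<bullet> (integral\<^sup>L M F *v y)
      = (\<Sum>i\<in>UNIV. y $ i * (\<Sum>j\<in>UNIV. integral\<^sup>L M (\<lambda>\<omega>. F \<omega> $ i $ j) * y $ j))"
    by (simp add: inner_vec_def matrix_vector_mult_def integral_entry[OF F])
  also have "\<dots> = integral\<^sup>L M (\<lambda>\<omega>. \<Sum>i\<in>UNIV. y $ i * (\<Sum>j\<in>UNIV. F \<omega> $ i $ j * y $ j))"
    using entry by (simp add: integral_sum integral_mult_left integral_mult_right integrable_sum)
  also have "\<dots> = integral\<^sup>L M (\<lambda>\<omega>. y \<bullet> (F \<omega> *v y))"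
    by (simp add: inner_vec_def matrix_vector_mult_def)
  finally show ?thesis .
qed

text \<open>Bounded measurable real random variables: closed under the arithmetic operations
  that occur below and always integrable, which removes all integrability side goals.\<close>

context prob_space
begin

definition bounded_rv :: "('a \<Rightarrow> real) \<Rightarrow> bool" where
  "bounded_rv f \<longleftrightarrow> f \<in> borel_measurable M \<and> (\<exists>c. \<forall>\<omega>\<in>space M. \<bar>f \<omega>\<bar> \<le> c)"

lemma bounded_rvI: "f \<in> borel_measurable M \<Longrightarrow> (\<And>\<omega>. \<omega> \<in> space M \<Longrightarrow> \<bar>f \<omega>\<bar> \<le> c) \<Longrightarrow> bounded_rv f"
  unfolding bounded_rv_def by blast

lemma bounded_rv_const[intro!]: "bounded_rv (\<lambda>\<omega>. c)"
  by (rule bounded_rvI[where c="\<bar>c\<bar>"]) auto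

lemma bounded_rv_add[intro!]: "bounded_rv f \<Longrightarrow> bounded_rv g \<Longrightarrow> bounded_rv (\<lambda>\<omega>. f \<omega> + g \<omega>)"
  unfolding bounded_rv_def
  by (auto intro!: exI[where x="_ + _"] abs_triangle_ineq[THEN order_trans] add_mono)

lemma bounded_rv_diff[intro!]: "bounded_rv f \<Longrightarrow> bounded_rv g \<Longrightarrow> bounded_rv (\<lambda>\<omega>. f \<omega> - g \<omega>)"
  unfolding bounded_rv_def
  by (auto intro!: exI[where x="_ + _"] abs_triangle_ineq4[THEN order_trans] add_mono)

lemma bounded_rv_mult[intro!]:
  assumes "bounded_rv f" "bounded_rv g"
  shows "bounded_rv (\<lambda>\<omega>. f \<omega> * g \<omega>)"
proof -
  obtain c d where c: "\<And>\<omega>. \<omega> \<in> space M \<Longrightarrow> \<bar>f \<omega>\<bar> \<le> c"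
    and d: "\<And>\<omega>. \<omega> \<in> space M \<Longrightarrow> \<bar>g \<omega>\<bar> \<le> d"
    using assms unfolding bounded_rv_def by blast
  show ?thesis
  proof (rule bounded_rvI[where c="c * d"])
    show "(\<lambda>\<omega>. f \<omega> * g \<omega>) \<in> borel_measurable M" using assms unfolding bounded_rv_def by auto
    fix \<omega> assume \<omega>: "\<omega> \<in> space M"
    show "\<bar>f \<omega> * g \<omega>\<bar> \<le> c * d" unfolding abs_mult
      using c[OF \<omega>] d[OF \<omega>] by (intro mult_mono) (auto intro: order_trans[OF abs_ge_zero])
  qed
qed

lemma bounded_rv_minus[intro!]: "bounded_rv f \<Longrightarrow> bounded_rv (\<lambda>\<omega>. - f \<omega>)"
  unfolding bounded_rv_def by auto

lemma bounded_rv_if[intro!]: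
  "(P \<Longrightarrow> bounded_rv f) \<Longrightarrow> (\<not> P \<Longrightarrow> bounded_rv g) \<Longrightarrow> bounded_rv (\<lambda>\<omega>. if P then f \<omega> else g \<omega>)"
  by (cases P) auto

lemma bounded_rv_sum[intro!]: "(\<And>i. i \<in> I \<Longrightarrow> bounded_rv (f i)) \<Longrightarrow> bounded_rv (\<lambda>\<omega>. \<Sum>i\<in>I. f i \<omega>)"
  by (induction I rule: infinite_finite_induct) auto

lemma bounded_rv_power2[intro!]: "bounded_rv f \<Longrightarrow> bounded_rv (\<lambda>\<omega>. (f \<omega>)^2)"
  unfolding power2_eq_square by auto

lemma bounded_rv_integrable: "bounded_rv f \<Longrightarrow> integrable M f"
  unfolding bounded_rv_def by (auto intro!: integrable_const_bound AE_I2)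

definition bounded_matrix_rv :: "('a \<Rightarrow> real^'n^'m) \<Rightarrow> bool" where
  "bounded_matrix_rv F \<longleftrightarrow> (\<forall>i j. bounded_rv (\<lambda>\<omega>. F \<omega> $ i $ j))"

lemma bounded_matrix_rv_integrable:
  fixes F :: "'a \<Rightarrow> real^'n^'m"
  assumes "bounded_matrix_rv F"
  shows "integrable M F"
proof -
  have "\<forall>i j. \<exists>c. \<forall>\<omega>\<in>space M. \<bar>F \<omega> $ i $ j\<bar> \<le> c"
    using assms unfolding bounded_matrix_rv_def bounded_rv_def by blast
  then obtain C where C: "\<And>i j \<omega>. \<omega> \<in> space M \<Longrightarrow> \<bar>F \<omega> $ i $ j\<bar> \<le> C i j"
    by metis
  have meas: "F \<in> borel_measurable M"
    using assms unfolding bounded_matrix_rv_def bounded_rv_def by (intro mat_borel_measurableI) blast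
  have "norm (F \<omega>) \<le> (\<Sum>i\<in>UNIV. \<Sum>j\<in>UNIV. C i j)" if "\<omega> \<in> space M" for \<omega>
  proof -
    have "norm (F \<omega>) \<le> (\<Sum>i\<in>UNIV. norm (F \<omega> $ i))"
      unfolding norm_vec_def by (rule L2_set_le_sum) auto
    also have "\<dots> \<le> (\<Sum>i\<in>UNIV. \<Sum>j\<in>UNIV. \<bar>F \<omega> $ i $ j\<bar>)"
      by (intro sum_mono norm_le_l1_cart)
    also have "\<dots> \<le> (\<Sum>i\<in>UNIV. \<Sum>j\<in>UNIV. C i j)"
      using C[OF that] by (intro sum_mono) auto
    finally show ?thesis .
  qed
  then show ?thesis
    by (intro integrable_const_bound[OF _ meas] AE_I2)
qed

lemma bounded_matrix_rv_mult[intro!]: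
  "bounded_matrix_rv F \<Longrightarrow> bounded_matrix_rv G \<Longrightarrow> bounded_matrix_rv (\<lambda>\<omega>. F \<omega> ** G \<omega>)"
  unfolding bounded_matrix_rv_def by (auto simp: matrix_matrix_mult_def)

lemma bounded_matrix_rv_add[intro!]:
  "bounded_matrix_rv F \<Longrightarrow> bounded_matrix_rv G \<Longrightarrow> bounded_matrix_rv (\<lambda>\<omega>. F \<omega> + G \<omega>)"
  unfolding bounded_matrix_rv_def by auto

lemma bounded_matrix_rv_diff[intro!]:
  "bounded_matrix_rv F \<Longrightarrow> bounded_matrix_rv G \<Longrightarrow> bounded_matrix_rv (\<lambda>\<omega>. F \<omega> - G \<omega>)"
  unfolding bounded_matrix_rv_def by auto

lemma bounded_matrix_rv_transpose[intro!]:
  "bounded_matrix_rv F \<Longrightarrow> bounded_matrix_rv (\<lambda>\<omega>. transpose (F \<omega>))"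
  unfolding bounded_matrix_rv_def by (auto simp: transpose_def)

lemma bounded_matrix_rv_lap[intro!]: "bounded_matrix_rv F \<Longrightarrow> bounded_matrix_rv (\<lambda>\<omega>. lap (F \<omega>))"
  unfolding bounded_matrix_rv_def by (auto simp: lap_def)

lemma bounded_matrix_rv_const[intro!]: "bounded_matrix_rv (\<lambda>\<omega>. c)"
  unfolding bounded_matrix_rv_def by auto

lemma second_moment_sum_uncorrelated:
  fixes X :: "'i \<Rightarrow> 'a \<Rightarrow> real"
  assumes I: "finite I"
    and int: "\<And>i k. i \<in> I \<Longrightarrow> k \<in> I \<Longrightarrow> integrable M (\<lambda>\<omega>. X i \<omega> * X k \<omega>)"
    and uncorr: "\<And>i k. i \<in> I \<Longrightarrow> k \<in> I \<Longrightarrow> i \<noteq> k \<Longrightarrow>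
        expectation (\<lambda>\<omega>. X i \<omega> * X k \<omega>) = expectation (X i) * expectation (X k)"
    and mean0: "(\<Sum>i\<in>I. expectation (X i)) = 0"
  shows "expectation (\<lambda>\<omega>. (\<Sum>i\<in>I. X i \<omega>)^2) \<le> (\<Sum>i\<in>I. expectation (\<lambda>\<omega>. (X i \<omega>)^2))"
proof -
  define E where "E i = expectation (X i)" for i
  define D where "D i = expectation (\<lambda>\<omega>. (X i \<omega>)^2) - (E i)^2" for i
  have "expectation (\<lambda>\<omega>. (\<Sum>i\<in>I. X i \<omega>)^2) = expectation (\<lambda>\<omega>. \<Sum>i\<in>I. \<Sum>k\<in>I. X i \<omega> * X k \<omega>)"
    by (simp add: power2_eq_square sum_product)
  also have "\<dots> = (\<Sum>i\<in>I. \<Sum>k\<in>I. expectation (\<lambda>\<omega>. X i \<omega> * X k \<omega>))"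
    using int by (simp add: Bochner_Integration.integral_sum)
  also have "\<dots> = (\<Sum>i\<in>I. \<Sum>k\<in>I. E i * E k + (if i = k then D i else 0))"
    by (intro sum.cong refl) (auto simp: uncorr E_def D_def power2_eq_square)
  also have "\<dots> = (\<Sum>i\<in>I. E i)^2 + (\<Sum>i\<in>I. D i)"
    using I by (simp add: sum.distrib power2_eq_square sum_product)
  also have "\<dots> \<le> (\<Sum>i\<in>I. expectation (\<lambda>\<omega>. (X i \<omega>)^2))"
    unfolding D_def E_def mean0 by (simp add: sum_subtractf sum_nonneg)
  finally show ?thesis .
qed

lemma independent_expectation_mono:
  fixes f :: "'b \<times> 'b \<Rightarrow> real" and X Y :: "'a \<Rightarrow> 'b"
  assumes ind: "indep_var N X K Y"
    and f[measurable]: "f \<in> borel_measurable (N \<Otimes>\<^sub>M K)"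
    and g[measurable]: "g \<in> borel_measurable N"
    and intf: "integrable M (\<lambda>\<omega>. f (X \<omega>, Y \<omega>))"
    and intg: "integrable M (\<lambda>\<omega>. g (X \<omega>))"
    and le: "\<And>x. x \<in> space N \<Longrightarrow> expectation (\<lambda>\<omega>. f (x, Y \<omega>)) \<le> g x"
  shows "expectation (\<lambda>\<omega>. f (X \<omega>, Y \<omega>)) \<le> expectation (\<lambda>\<omega>. g (X \<omega>))"
proof -
  have rv[measurable]: "random_variable N X" "random_variable K Y"
    and eq: "distr M N X \<Otimes>\<^sub>M distr M K Y = distr M (N \<Otimes>\<^sub>M K) (\<lambda>x. (X x, Y x))"
    using ind unfolding indep_var_distribution_eq by auto
  interpret PX: prob_space "distr M N X" by (rule prob_space_distr) (rule rv)
  interpret PY: prob_space "distr M K Y" by (rule prob_space_distr) (rule rv)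
  interpret P: pair_sigma_finite "distr M N X" "distr M K Y"
    by (intro pair_sigma_finite.intro PX.sigma_finite_measure_axioms PY.sigma_finite_measure_axioms)
  have intP: "integrable (distr M N X \<Otimes>\<^sub>M distr M K Y) f"
    unfolding eq by (subst integrable_distr_eq) (auto simp: intf)
  have "expectation (\<lambda>\<omega>. f (X \<omega>, Y \<omega>)) = integral\<^sup>L (distr M (N \<Otimes>\<^sub>M K) (\<lambda>x. (X x, Y x))) f"
    by (subst integral_distr) auto
  also have "\<dots> = (\<integral>x. (\<integral>y. f (x, y) \<partial>distr M K Y) \<partial>distr M N X)"
    unfolding eq[symmetric] by (rule P.integral_fst'[symmetric, OF intP])
  also have "\<dots> \<le> (\<integral>x. g x \<partial>distr M N X)"
  proof (rule integral_mono[OF P.integrable_fst'[OF intP]])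
    show "integrable (distr M N X) g" by (subst integrable_distr_eq) (auto simp: intg)
    fix x assume "x \<in> space (distr M N X)"
    then have x: "x \<in> space N" by simp
    then have "(\<integral>y. f (x, y) \<partial>distr M K Y) = expectation (\<lambda>\<omega>. f (x, Y \<omega>))"
      by (subst integral_distr) auto
    then show "(\<integral>y. f (x, y) \<partial>distr M K Y) \<le> g x" using le[OF x] by simp
  qed
  also have "\<dots> = expectation (\<lambda>\<omega>. g (X \<omega>))"
    by (subst integral_distr) auto
  finally show ?thesis .
qed

end

lemma traj_cong: "(\<And>s. s < t \<Longrightarrow> C s \<omega> = D s \<omega>') \<Longrightarrow> traj C x0 t \<omega> = traj D x0 t \<omega>'"
  by (induction t) auto

lemma measurable_traj:
  fixes C :: "nat \<Rightarrow> 'a \<Rightarrow> real^'n^'n"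
  assumes "\<And>s. C s \<in> borel_measurable M"
  shows "(\<lambda>\<omega>. traj C x0 t \<omega>) \<in> borel_measurable M"
proof (induction t)
  case 0 then show ?case by simp
next
  case (Suc t)
  note [measurable] = Suc assms
  show ?case by simp
qed

text \<open>The trajectory as a function of the matrix sequence itself, needed to separate the
  past A(0), ..., A(t-1) from the present A(t) in the independence argument.\<close>

definition traj_of_seq :: "real^'n \<Rightarrow> nat \<Rightarrow> (nat \<Rightarrow> real^'n^'n) \<Rightarrow> real^'n" where
  "traj_of_seq x0 t r = traj (\<lambda>s r. r s) x0 t r"

lemma measurable_traj_of_seq:
  "s \<le> t \<Longrightarrow> traj_of_seq x0 s \<in> borel_measurable (PiM {..<t} (\<lambda>_. borel))"
proof (induction s)
  case 0 then show ?case by (simp add: traj_of_seq_def)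
next
  case (Suc s)
  then have [measurable]: "traj_of_seq x0 s \<in> borel_measurable (PiM {..<t} (\<lambda>_. borel))" by simp
  have [measurable]: "(\<lambda>r. r s) \<in> measurable (PiM {..<t} (\<lambda>_. borel)) (borel :: (real^'n^'n) measure)"
    using Suc by (intro measurable_component_singleton) auto
  have "traj_of_seq x0 (Suc s) = (\<lambda>r. traj_of_seq x0 s r - lap (r s) *v traj_of_seq x0 s r)"
    by (simp add: traj_of_seq_def fun_eq_iff)
  also have "\<dots> \<in> borel_measurable (PiM {..<t} (\<lambda>_. borel))" by measurable
  finally show ?case .
qed

definition lyap :: "real \<Rightarrow> real \<Rightarrow> real \<Rightarrow> real^'n \<Rightarrow> real" where
  "lyap \<gamma> c \<kappa> v = ((\<Sum>i\<in>UNIV. v $ i) - c)^2 + \<gamma> * (\<Sum>i\<in>UNIV. v $ i * v $ i) + \<kappa> * ((\<Sum>i\<in>UNIV. v $ i) - c)"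

lemma measurable_lyap[measurable]: "lyap \<gamma> c \<kappa> \<in> borel_measurable borel"
  unfolding lyap_def[abs_def] by measurable

text \<open>With \<kappa> = -2c\<gamma>/N, Cauchy-Schwarz (1^*v)^2 \<le> N|v|^2 bounds W from below
  by a multiple of (1^*v - c)^2.\<close>

lemma lyap_lower_bound:
  fixes v :: "real^'n"
  defines "N \<equiv> real CARD('n)"
  assumes "\<gamma> \<ge> 0"
  shows "(1 + \<gamma> / N) * ((\<Sum>i\<in>UNIV. v $ i) - c)^2 + \<gamma> * c^2 / N \<le> lyap \<gamma> c (- 2 * c * \<gamma> / N) v"
proof -
  define s where "s = (\<Sum>i\<in>UNIV. v $ i)"
  have N0: "N > 0" by (simp add: N_def)
  have "s^2 \<le> N * (\<Sum>i\<in>UNIV. v $ i * v $ i)"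
    using Cauchy_Schwarz_ineq_sum[of "\<lambda>_. 1" "\<lambda>i. v $ i" UNIV]
    by (simp add: s_def N_def power2_eq_square)
  then have "\<gamma> * s^2 \<le> \<gamma> * (N * (\<Sum>i\<in>UNIV. v $ i * v $ i))"
    using assms(2) by (rule mult_left_mono)
  then have "\<gamma> * s^2 / N \<le> \<gamma> * (\<Sum>i\<in>UNIV. v $ i * v $ i)"
    using N0 by (simp add: pos_divide_le_eq algebra_simps)
  moreover have "(1 + \<gamma> / N) * (s - c)^2 + \<gamma> * c^2 / N
      = (s - c)^2 + \<gamma> * s^2 / N + (- 2 * c * \<gamma> / N) * (s - c)"
    using N0 by (simp add: field_simps power2_eq_square)
  ultimately show ?thesis unfolding lyap_def s_def[symmetric] by linarith
qed

lemma Var_expand: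
  fixes x :: "real^'n"
  shows "Var x = ((\<Sum>i\<in>UNIV. x $ i * x $ i) - (\<Sum>i\<in>UNIV. x $ i)^2 / real CARD('n)) / real CARD('n)"
proof -
  define c where "c = (\<Sum>i\<in>UNIV. x $ i)"
  define N where "N = real CARD('n)"
  have N0: "N > 0" by (simp add: N_def)
  have "(\<Sum>i\<in>UNIV. (x $ i - c / N)^2) = (\<Sum>i\<in>UNIV. x $ i * x $ i - 2 * (c / N) * x $ i + (c/N)^2)"
    by (intro sum.cong) (auto simp: power2_eq_square algebra_simps)
  also have "\<dots> = (\<Sum>i\<in>UNIV. x $ i * x $ i) - 2 * (c/N) * c + N * (c/N)^2"
    by (simp only: sum.distrib sum_subtractf flip: sum_distrib_left) (simp add: N_def c_def)
  also have "\<dots> = (\<Sum>i\<in>UNIV. x $ i * x $ i) - c^2 / N"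
    using N0 by (simp add: field_simps power2_eq_square)
  finally show ?thesis by (simp add: Var_def avg_def c_def N_def)
qed

lemma consensus_arithmetic:
  fixes N \<gamma> I c Q :: real
  assumes N: "N > 0" and \<gamma>: "\<gamma> > 0"
    and le: "(1 + \<gamma> / N) * I + \<gamma> * c^2 / N \<le> \<gamma> * Q"
  shows "I / N^2 \<le> \<gamma> / (N + \<gamma>) * ((Q - c^2 / N) / N)"
proof -
  have "N * ((1 + \<gamma> / N) * I + \<gamma> * c^2 / N) = (N + \<gamma>) * I + \<gamma> * c^2"
    using N by (simp add: field_simps)
  moreover have "N * ((1 + \<gamma> / N) * I + \<gamma> * c^2 / N) \<le> N * (\<gamma> * Q)"
    using le N by (intro mult_left_mono) auto
  ultimately have "(N + \<gamma>) * I \<le> \<gamma> * (N * Q - c^2)" by (simp add: algebra_simps)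
  then have "I \<le> \<gamma> * (N * Q - c^2) / (N + \<gamma>)"
    using N \<gamma> by (simp add: pos_le_divide_eq mult.commute)
  then have "I / N^2 \<le> \<gamma> * (N * Q - c^2) / (N + \<gamma>) / N^2"
    by (rule divide_right_mono) simp
  also have "\<dots> = \<gamma> / (N + \<gamma>) * ((Q - c^2 / N) / N)"
    using N by (simp add: field_simps power2_eq_square)
  finally show ?thesis .
qed

text \<open>The standing assumptions of the theorem.  Inside the locale, A' is a version of A that is admissible everywhere:
  it agrees with A almost surely, so all expectations are unchanged, but its entries
  are bounded pointwise.\<close>

locale consensus_model = prob_space M for M :: "'a measure" +
  fixes A :: "nat \<Rightarrow> 'a \<Rightarrow> real^'n^'n" and armax \<alpha> :: real
  assumes measurable_A[measurable]: "\<And>t. A t \<in> borel_measurable M"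
    and indep_A: "indep_vars (\<lambda>_. borel) A UNIV"
    and nonneg: "\<And>t. AE \<omega> in M. \<forall>i j. A t \<omega> $ i $ j \<ge> 0"
    and stoch: "\<And>t. AE \<omega> in M. \<forall>i. (\<Sum>j\<in>UNIV. A t \<omega> $ i $ j) = 1"
    and colsum: "\<And>t. ones v* (integral\<^sup>L M (\<lambda>\<omega>. lap (A t \<omega>))) = 0"
    and armax_pos: "armax > 0" and alpha_pos: "\<alpha> > 0"
    and rowbound: "\<And>t. AE \<omega> in M. \<forall>i. (\<Sum>j\<in>UNIV - {i}. A t \<omega> $ i $ j) \<le> armax"
    and diagbound: "\<And>t. AE \<omega> in M. \<forall>i. A t \<omega> $ i $ i \<ge> \<alpha>"
    and uncorr: "\<And>t i j k l. i \<noteq> k \<Longrightarrow>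
        integral\<^sup>L M (\<lambda>\<omega>. A t \<omega> $ i $ j * A t \<omega> $ k $ l)
          = integral\<^sup>L M (\<lambda>\<omega>. A t \<omega> $ i $ j) * integral\<^sup>L M (\<lambda>\<omega>. A t \<omega> $ k $ l)"
begin

definition \<gamma> :: real where "\<gamma> = armax / \<alpha>"

lemma gamma_pos: "\<gamma> > 0" using armax_pos alpha_pos by (simp add: \<gamma>_def)

definition admissible :: "real^'n^'n \<Rightarrow> bool" where
  "admissible a \<longleftrightarrow> (\<forall>i j. 0 \<le> a $ i $ j) \<and> (\<forall>i. (\<Sum>j\<in>UNIV. a $ i $ j) = 1)
     \<and> (\<forall>i. (\<Sum>j\<in>UNIV - {i}. a $ i $ j) \<le> armax) \<and> (\<forall>i. \<alpha> \<le> a $ i $ i)"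

lemma AE_admissible: "AE \<omega> in M. admissible (A t \<omega>)"
  using nonneg[of t] stoch[of t] rowbound[of t] diagbound[of t]
  by eventually_elim (simp add: admissible_def)

lemma admissible_exists: "\<exists>a. admissible a"
proof (rule ccontr)
  assume "\<not> ?thesis"
  then have "AE \<omega> in M. False" using AE_admissible[of 0] by (auto elim: eventually_mono)
  then show False by simp
qed

definition regularize :: "real^'n^'n \<Rightarrow> real^'n^'n" where
  "regularize a = (if admissible a then a else (SOME b. admissible b))"

lemma admissible_regularize: "admissible (regularize a)"
  using someI_ex[OF admissible_exists] by (simp add: regularize_def)

lemma measurable_regularize[measurable]: "regularize \<in> borel_measurable borel"
proof -
  have [measurable]: "Measurable.pred borel admissible"
    unfolding admissible_def by measurable
  show ?thesis unfolding regularize_def by measurable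
qed

definition A' :: "nat \<Rightarrow> 'a \<Rightarrow> real^'n^'n" where
  "A' t \<omega> = regularize (A t \<omega>)"

lemma measurable_A'[measurable]: "A' t \<in> borel_measurable M"
proof -
  have "A' t = (\<lambda>\<omega>. regularize (A t \<omega>))" by (simp add: fun_eq_iff A'_def)
  then show ?thesis by simp
qed

lemma admissible_A': "admissible (A' t \<omega>)" by (simp add: A'_def admissible_regularize)

lemma row_stochastic_A': "\<forall>i. (\<Sum>j\<in>UNIV. A' t \<omega> $ i $ j) = 1"
  using admissible_A' by (simp add: admissible_def)

lemma averaging_step_A': "y $ i - (lap (A' t \<omega>) *v y) $ i = (\<Sum>j\<in>UNIV. A' t \<omega> $ i $ j * y $ j)"
  using averaging_step[OF row_stochastic_A'[of t \<omega>], of y i] by simp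

lemma AE_A'_eq: "AE \<omega> in M. A' t \<omega> = A t \<omega>"
  using AE_admissible[of t] by eventually_elim (simp add: A'_def regularize_def)

lemma indep_A': "indep_vars (\<lambda>_. borel) A' UNIV"
proof -
  have "A' = (\<lambda>i \<omega>. regularize (A i \<omega>))" by (simp add: fun_eq_iff A'_def)
  then show ?thesis
    using indep_vars_compose2[OF indep_A, where Y="\<lambda>i. regularize" and N="\<lambda>_. borel"] by simp
qed

lemma integral_A_eq_A':
  fixes f :: "real^'n^'n \<Rightarrow> 'b::{banach, second_countable_topology}"
  assumes [measurable]: "f \<in> borel_measurable borel"
  shows "integral\<^sup>L M (\<lambda>\<omega>. f (A t \<omega>)) = integral\<^sup>L M (\<lambda>\<omega>. f (A' t \<omega>))"
  by (rule integral_cong_AE) (use AE_A'_eq[of t] in \<open>auto elim: eventually_mono\<close>)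

lemma admissible_entry_bounds:
  assumes "admissible a" shows "0 \<le> a $ i $ j" "a $ i $ j \<le> 1"
proof -
  show "0 \<le> a $ i $ j" using assms by (simp add: admissible_def)
  have "a $ i $ j \<le> (\<Sum>k\<in>UNIV. a $ i $ k)"
    using assms by (intro member_le_sum) (auto simp: admissible_def)
  then show "a $ i $ j \<le> 1" using assms by (simp add: admissible_def)
qed

lemma bounded_rv_A'[intro!]: "bounded_rv (\<lambda>\<omega>. A' t \<omega> $ i $ j)"
  by (rule bounded_rvI[where c=1]) (use admissible_A' admissible_entry_bounds in auto)

lemma bounded_matrix_rv_A'[intro!]: "bounded_matrix_rv (A' t)"
  unfolding bounded_matrix_rv_def by auto

lemma bounded_rv_lap_mult_vec[intro!]: "bounded_rv (\<lambda>\<omega>. (lap (A' t \<omega>) *v y) $ i)"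
  unfolding lap_mult_vec by auto

lemma integrable_A'[simp]: "integrable M (\<lambda>\<omega>. A' t \<omega> $ i $ j)"
  by (intro bounded_rv_integrable) auto

lemma integrable_A'_mult[simp]: "integrable M (\<lambda>\<omega>. A' t \<omega> $ i $ j * A' t \<omega> $ k $ l)"
  by (intro bounded_rv_integrable) auto

lemma integrable_lap[simp]: "integrable M (\<lambda>\<omega>. lap (A' t \<omega>) $ i $ j)"
  by (intro bounded_rv_integrable) (auto simp: lap_def)

lemma integrable_lap_mult_vec[simp]: "integrable M (\<lambda>\<omega>. (lap (A' t \<omega>) *v y) $ i)"
  by (intro bounded_rv_integrable) auto

lemma expected_lap_column_sum: "(\<Sum>i\<in>UNIV. integral\<^sup>L M (\<lambda>\<omega>. lap (A' t \<omega>) $ i $ j)) = 0"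
proof -
  have "integral\<^sup>L M (\<lambda>\<omega>. lap (A t \<omega>)) = integral\<^sup>L M (\<lambda>\<omega>. lap (A' t \<omega>))"
    by (rule integral_A_eq_A') measurable
  then have "0 = (ones v* integral\<^sup>L M (\<lambda>\<omega>. lap (A' t \<omega>))) $ j" using colsum[of t] by simp
  also have "\<dots> = (\<Sum>i\<in>UNIV. integral\<^sup>L M (\<lambda>\<omega>. lap (A' t \<omega>)) $ i $ j)"
    by (simp add: vector_matrix_mult_def ones_def)
  also have "\<dots> = (\<Sum>i\<in>UNIV. integral\<^sup>L M (\<lambda>\<omega>. lap (A' t \<omega>) $ i $ j))"
    by (simp add: integral_entry bounded_matrix_rv_integrable bounded_matrix_rv_lap bounded_matrix_rv_A')
  finally show ?thesis by simp
qed

lemma expected_column_sum: "(\<Sum>i\<in>UNIV. integral\<^sup>L M (\<lambda>\<omega>. A' t \<omega> $ i $ j)) = 1"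
proof -
  have "0 = (\<Sum>i\<in>UNIV. integral\<^sup>L M (\<lambda>\<omega>. lap (A' t \<omega>) $ i $ j))"
    by (rule expected_lap_column_sum[symmetric])
  also have "\<dots> = integral\<^sup>L M (\<lambda>\<omega>. \<Sum>i\<in>UNIV. lap (A' t \<omega>) $ i $ j)"
    by (rule Bochner_Integration.integral_sum[symmetric])
       (auto intro!: bounded_rv_integrable simp: lap_def)
  also have "\<dots> = integral\<^sup>L M (\<lambda>\<omega>. 1 - (\<Sum>i\<in>UNIV. A' t \<omega> $ i $ j))"
    by (simp add: lap_column_sum row_stochastic_A')
  also have "\<dots> = 1 - (\<Sum>i\<in>UNIV. integral\<^sup>L M (\<lambda>\<omega>. A' t \<omega> $ i $ j))"
    by (simp add: Bochner_Integration.integral_diff Bochner_Integration.integral_sum prob_space)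
  finally show ?thesis by simp
qed

lemma uncorrelated_A':
  "i \<noteq> k \<Longrightarrow> integral\<^sup>L M (\<lambda>\<omega>. A' t \<omega> $ i $ j * A' t \<omega> $ k $ l)
     = integral\<^sup>L M (\<lambda>\<omega>. A' t \<omega> $ i $ j) * integral\<^sup>L M (\<lambda>\<omega>. A' t \<omega> $ k $ l)"
  using uncorr[of i k t j l]
  by (simp add: integral_A_eq_A'[where f="\<lambda>a. a $ i $ j * a $ k $ l"]
      integral_A_eq_A'[where f="\<lambda>a. a $ i $ j"] integral_A_eq_A'[where f="\<lambda>a. a $ k $ l"])

lemma expected_lap_mult_vec:
  "integral\<^sup>L M (\<lambda>\<omega>. (lap (A' t \<omega>) *v y) $ i)
     = (\<Sum>j\<in>UNIV. integral\<^sup>L M (\<lambda>\<omega>. A' t \<omega> $ i $ j) * (y $ i - y $ j))"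
  by (simp add: lap_mult_vec Bochner_Integration.integral_sum)

lemma expected_lap_mult_vec_sum: "(\<Sum>i\<in>UNIV. integral\<^sup>L M (\<lambda>\<omega>. (lap (A' t \<omega>) *v y) $ i)) = 0"
proof -
  have "(\<Sum>i\<in>UNIV. integral\<^sup>L M (\<lambda>\<omega>. (lap (A' t \<omega>) *v y) $ i))
      = (\<Sum>i\<in>UNIV. \<Sum>j\<in>UNIV. integral\<^sup>L M (\<lambda>\<omega>. lap (A' t \<omega>) $ i $ j) * y $ j)"
    by (simp add: matrix_vector_mult_def Bochner_Integration.integral_sum)
  also have "\<dots> = (\<Sum>j\<in>UNIV. (\<Sum>i\<in>UNIV. integral\<^sup>L M (\<lambda>\<omega>. lap (A' t \<omega>) $ i $ j)) * y $ j)"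
    by (subst sum.swap) (simp add: sum_distrib_right)
  finally show ?thesis by (simp add: expected_lap_column_sum)
qed

lemma uncorrelated_lap_mult_vec:
  assumes "i \<noteq> k"
  shows "integral\<^sup>L M (\<lambda>\<omega>. (lap (A' t \<omega>) *v y) $ i * (lap (A' t \<omega>) *v y) $ k)
     = integral\<^sup>L M (\<lambda>\<omega>. (lap (A' t \<omega>) *v y) $ i) * integral\<^sup>L M (\<lambda>\<omega>. (lap (A' t \<omega>) *v y) $ k)"
proof -
  define c where "c j l = (y $ i - y $ j) * (y $ k - y $ l)" for j l
  have prod: "(lap (A' t \<omega>) *v y) $ i * (lap (A' t \<omega>) *v y) $ k
     = (\<Sum>j\<in>UNIV. \<Sum>l\<in>UNIV. c j l * (A' t \<omega> $ i $ j * A' t \<omega> $ k $ l))" for \<omega>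
    by (simp add: c_def lap_mult_vec sum_product algebra_simps)
  have "integral\<^sup>L M (\<lambda>\<omega>. (lap (A' t \<omega>) *v y) $ i * (lap (A' t \<omega>) *v y) $ k)
     = (\<Sum>j\<in>UNIV. \<Sum>l\<in>UNIV. c j l * integral\<^sup>L M (\<lambda>\<omega>. A' t \<omega> $ i $ j * A' t \<omega> $ k $ l))"
    unfolding prod by (simp add: Bochner_Integration.integral_sum)
  also have "\<dots> = (\<Sum>j\<in>UNIV. \<Sum>l\<in>UNIV. c j l
      * (integral\<^sup>L M (\<lambda>\<omega>. A' t \<omega> $ i $ j) * integral\<^sup>L M (\<lambda>\<omega>. A' t \<omega> $ k $ l)))"
    using assms by (simp add: uncorrelated_A')
  also have "\<dots> = integral\<^sup>L M (\<lambda>\<omega>. (lap (A' t \<omega>) *v y) $ i) * integral\<^sup>L M (\<lambda>\<omega>. (lap (A' t \<omega>) *v y) $ k)"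
    unfolding expected_lap_mult_vec by (simp add: c_def sum_product algebra_simps)
  finally show ?thesis .
qed

lemma second_moment_sum_lap_mult_vec:
  "integral\<^sup>L M (\<lambda>\<omega>. (\<Sum>i\<in>UNIV. (lap (A' t \<omega>) *v y) $ i)^2)
     \<le> (\<Sum>i\<in>UNIV. integral\<^sup>L M (\<lambda>\<omega>. ((lap (A' t \<omega>) *v y) $ i)^2))"
  by (rule second_moment_sum_uncorrelated)
     (auto intro!: bounded_rv_integrable simp: uncorrelated_lap_mult_vec expected_lap_mult_vec_sum)

lemma second_moment_lap_mult_vec:
  "integral\<^sup>L M (\<lambda>\<omega>. ((lap (A' t \<omega>) *v y) $ i)^2)
     \<le> \<gamma> * integral\<^sup>L M (\<lambda>\<omega>. (\<Sum>j\<in>UNIV. A' t \<omega> $ i $ j * (y $ j)^2) - (\<Sum>j\<in>UNIV. A' t \<omega> $ i $ j * y $ j)^2)"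
proof -
  have "integral\<^sup>L M (\<lambda>\<omega>. ((lap (A' t \<omega>) *v y) $ i)^2)
     \<le> integral\<^sup>L M (\<lambda>\<omega>. \<gamma> * ((\<Sum>j\<in>UNIV. A' t \<omega> $ i $ j * (y $ j)^2) - (\<Sum>j\<in>UNIV. A' t \<omega> $ i $ j * y $ j)^2))"
  proof (rule integral_mono)
    fix \<omega>
    have "admissible (A' t \<omega>)" by (rule admissible_A')
    then show "((lap (A' t \<omega>) *v y) $ i)^2
        \<le> \<gamma> * ((\<Sum>j\<in>UNIV. A' t \<omega> $ i $ j * (y $ j)^2) - (\<Sum>j\<in>UNIV. A' t \<omega> $ i $ j * y $ j)^2)"
      unfolding lap_mult_vec \<gamma>_def
      by (intro row_inequality[where w="\<lambda>j. A' t \<omega> $ i $ j" and y="\<lambda>j. y $ j"])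
         (use alpha_pos in \<open>auto simp: admissible_def\<close>)
  qed (auto intro!: bounded_rv_integrable)
  then show ?thesis by simp
qed

text \<open>Summing the row variances: unit column sums of E[A'] turn the mean of squares into
  |y|^2, and the squared means are the coordinates of y - L y.\<close>

lemma expected_row_variance_sum:
  "(\<Sum>i\<in>UNIV. integral\<^sup>L M (\<lambda>\<omega>. (\<Sum>j\<in>UNIV. A' t \<omega> $ i $ j * (y $ j)^2) - (\<Sum>j\<in>UNIV. A' t \<omega> $ i $ j * y $ j)^2))
     = integral\<^sup>L M (\<lambda>\<omega>. y \<bullet> y - (y - lap (A' t \<omega>) *v y) \<bullet> (y - lap (A' t \<omega>) *v y))"
proof -
  have row: "integral\<^sup>L M (\<lambda>\<omega>. (\<Sum>j\<in>UNIV. A' t \<omega> $ i $ j * (y $ j)^2) - (\<Sum>j\<in>UNIV. A' t \<omega> $ i $ j * y $ j)^2)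
      = (\<Sum>j\<in>UNIV. integral\<^sup>L M (\<lambda>\<omega>. A' t \<omega> $ i $ j) * (y $ j)^2)
        - integral\<^sup>L M (\<lambda>\<omega>. (\<Sum>j\<in>UNIV. A' t \<omega> $ i $ j * y $ j)^2)" for i
    by (subst Bochner_Integration.integral_diff)
       (auto intro!: bounded_rv_integrable simp: Bochner_Integration.integral_sum)
  have squares: "integral\<^sup>L M (\<lambda>\<omega>. \<Sum>i\<in>UNIV. (\<Sum>j\<in>UNIV. A' t \<omega> $ i $ j * y $ j)^2)
      = (\<Sum>i\<in>UNIV. integral\<^sup>L M (\<lambda>\<omega>. (\<Sum>j\<in>UNIV. A' t \<omega> $ i $ j * y $ j)^2))"
    by (rule Bochner_Integration.integral_sum) (auto intro!: bounded_rv_integrable)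
  have means: "(\<Sum>i\<in>UNIV. \<Sum>j\<in>UNIV. integral\<^sup>L M (\<lambda>\<omega>. A' t \<omega> $ i $ j) * (y $ j)^2) = y \<bullet> y"
    by (subst sum.swap) (simp add: expected_column_sum inner_vec_def power2_eq_square flip: sum_distrib_right)
  have contraction: "(\<Sum>i\<in>UNIV. (\<Sum>j\<in>UNIV. A' t \<omega> $ i $ j * y $ j)^2)
      = (y - lap (A' t \<omega>) *v y) \<bullet> (y - lap (A' t \<omega>) *v y)" for \<omega>
    by (simp add: inner_vec_def averaging_step_A' power2_eq_square)
  have "integrable M (\<lambda>\<omega>. (y - lap (A' t \<omega>) *v y) \<bullet> (y - lap (A' t \<omega>) *v y))"
    by (intro bounded_rv_integrable) (simp add: inner_vec_def; auto)
  then show ?thesis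
    by (simp add: row sum_subtractf means flip: squares contraction)
       (simp add: Bochner_Integration.integral_diff prob_space)
qed

lemma key_estimate:
  "integral\<^sup>L M (\<lambda>\<omega>. (\<Sum>i\<in>UNIV. (lap (A' t \<omega>) *v y) $ i)^2)
     \<le> \<gamma> * integral\<^sup>L M (\<lambda>\<omega>. y \<bullet> y - (y - lap (A' t \<omega>) *v y) \<bullet> (y - lap (A' t \<omega>) *v y))"
proof -
  have "integral\<^sup>L M (\<lambda>\<omega>. (\<Sum>i\<in>UNIV. (lap (A' t \<omega>) *v y) $ i)^2)
     \<le> (\<Sum>i\<in>UNIV. integral\<^sup>L M (\<lambda>\<omega>. ((lap (A' t \<omega>) *v y) $ i)^2))"
    by (rule second_moment_sum_lap_mult_vec)
  also have "\<dots> \<le> (\<Sum>i\<in>UNIV. \<gamma> * integral\<^sup>L M (\<lambda>\<omega>. (\<Sum>j\<in>UNIV. A' t \<omega> $ i $ j * (y $ j)^2)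
      - (\<Sum>j\<in>UNIV. A' t \<omega> $ i $ j * y $ j)^2))"
    by (intro sum_mono second_moment_lap_mult_vec)
  also have "\<dots> = \<gamma> * integral\<^sup>L M (\<lambda>\<omega>. y \<bullet> y - (y - lap (A' t \<omega>) *v y) \<bullet> (y - lap (A' t \<omega>) *v y))"
    by (simp add: expected_row_variance_sum flip: sum_distrib_left)
  finally show ?thesis .
qed

end

context consensus_model
begin

text \<open>First claim: the Loewner inequality, obtained from the key estimate by writing both
  quadratic forms in terms of L y.\<close>

lemma loewner_inequality:
  "loewner_le
     (integral\<^sup>L M (\<lambda>\<omega>. transpose (lap (A t \<omega>)) ** ones_outer ** lap (A t \<omega>)))
     ((armax / \<alpha>) *\<^sub>R integral\<^sup>L M (\<lambda>\<omega>. lap (A t \<omega>) + transpose (lap (A t \<omega>))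
         - transpose (lap (A t \<omega>)) ** lap (A t \<omega>)))"
  unfolding loewner_le_def neg_semidef_def
proof
  fix y :: "real^'n"
  define F1 where "F1 a = transpose (lap a) ** ones_outer ** lap a" for a :: "real^'n^'n"
  define F2 where "F2 a = lap a + transpose (lap a) - transpose (lap a) ** lap a" for a :: "real^'n^'n"
  have [measurable]: "F1 \<in> borel_measurable borel" "F2 \<in> borel_measurable borel"
    unfolding F1_def[abs_def] F2_def[abs_def] by measurable
  have int: "integrable M (\<lambda>\<omega>. F1 (A' t \<omega>))" "integrable M (\<lambda>\<omega>. F2 (A' t \<omega>))"
    unfolding F1_def F2_def by (auto intro!: bounded_matrix_rv_integrable)
  have "y \<bullet> ((integral\<^sup>L M (\<lambda>\<omega>. F1 (A t \<omega>)) - (armax / \<alpha>) *\<^sub>R integral\<^sup>L M (\<lambda>\<omega>. F2 (A t \<omega>))) *v y)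
      = y \<bullet> (integral\<^sup>L M (\<lambda>\<omega>. F1 (A' t \<omega>)) *v y) - \<gamma> * (y \<bullet> (integral\<^sup>L M (\<lambda>\<omega>. F2 (A' t \<omega>)) *v y))"
    by (simp add: integral_A_eq_A' \<gamma>_def matrix_vector_mult_diff_rdistrib inner_diff_right
        flip: scaleR_matrix_vector_assoc)
  also have "\<dots> = integral\<^sup>L M (\<lambda>\<omega>. (\<Sum>i\<in>UNIV. (lap (A' t \<omega>) *v y) $ i)^2)
      - \<gamma> * integral\<^sup>L M (\<lambda>\<omega>. y \<bullet> y - (y - lap (A' t \<omega>) *v y) \<bullet> (y - lap (A' t \<omega>) *v y))"
    unfolding integral_quadratic_form[OF int(1)] integral_quadratic_form[OF int(2)]
    by (simp only: F1_def F2_def quad_form_ones_outer quad_form_contraction)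
  also have "\<dots> \<le> 0" using key_estimate[of t y] by simp
  finally show "y \<bullet> ((integral\<^sup>L M (\<lambda>\<omega>. F1 (A t \<omega>))
      - (armax / \<alpha>) *\<^sub>R integral\<^sup>L M (\<lambda>\<omega>. F2 (A t \<omega>))) *v y) \<le> 0" .
qed

text \<open>One step does not increase the Lyapunov function in expectation: the linear term
  vanishes since E[1^* L y] = 0, and the quadratic terms combine to
  E[(1^* L y)^2] - \<gamma> E[|y|^2 - |y - L y|^2] \<le> 0.\<close>

lemma lyap_step: "integral\<^sup>L M (\<lambda>\<omega>. lyap \<gamma> c \<kappa> (y - lap (A' t \<omega>) *v y)) \<le> lyap \<gamma> c \<kappa> y"
proof -
  define S where "S = (\<Sum>i\<in>UNIV. y $ i)"
  define T where "T \<omega> = (\<Sum>i\<in>UNIV. (lap (A' t \<omega>) *v y) $ i)" for \<omega>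
  define q where "q \<omega> = y \<bullet> y - (y - lap (A' t \<omega>) *v y) \<bullet> (y - lap (A' t \<omega>) *v y)" for \<omega>
  have expand: "lyap \<gamma> c \<kappa> (y - lap (A' t \<omega>) *v y)
      = lyap \<gamma> c \<kappa> y - (2 * (S - c) + \<kappa>) * T \<omega> + ((T \<omega>)^2 - \<gamma> * q \<omega>)" for \<omega>
    by (simp add: lyap_def S_def T_def q_def inner_vec_def sum_subtractf power2_eq_square algebra_simps)
  have int: "integrable M T" "integrable M (\<lambda>\<omega>. (T \<omega>)^2)" "integrable M q"
    unfolding T_def q_def by (intro bounded_rv_integrable; simp add: inner_vec_def; auto)+
  have "integral\<^sup>L M T = 0"
    unfolding T_def by (simp add: Bochner_Integration.integral_sum expected_lap_mult_vec_sum)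
  moreover have "integral\<^sup>L M (\<lambda>\<omega>. (T \<omega>)^2) \<le> \<gamma> * integral\<^sup>L M q"
    unfolding T_def q_def by (rule key_estimate)
  ultimately show ?thesis
    unfolding expand using int
    by (simp add: Bochner_Integration.integral_diff Bochner_Integration.integral_add prob_space)
qed

text \<open>The regularized trajectory stays in the cube of radius |x0|_1, since each step
  averages; in particular all its coordinates are bounded random variables.\<close>

lemma traj_A'_bound: "\<bar>traj A' x0 t \<omega> $ i\<bar> \<le> (\<Sum>k\<in>UNIV. \<bar>x0 $ k\<bar>)"
proof (induction t arbitrary: i)
  case 0 show ?case by simp (intro member_le_sum, auto)
next
  case (Suc t)
  define y where "y = traj A' x0 t \<omega>"
  define b where "b = (\<Sum>k\<in>UNIV. \<bar>x0 $ k\<bar>)"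
  have adm: "admissible (A' t \<omega>)" by (rule admissible_A')
  have "\<bar>traj A' x0 (Suc t) \<omega> $ i\<bar> = \<bar>\<Sum>j\<in>UNIV. A' t \<omega> $ i $ j * y $ j\<bar>"
    by (simp add: y_def averaging_step_A')
  also have "\<dots> \<le> (\<Sum>j\<in>UNIV. A' t \<omega> $ i $ j * b)"
    using adm Suc.IH unfolding y_def b_def
    by (intro order_trans[OF sum_abs] sum_mono) (auto simp: abs_mult admissible_def intro!: mult_left_mono)
  also have "\<dots> = b" using adm by (simp add: admissible_def flip: sum_distrib_right)
  finally show ?case by (simp add: b_def)
qed

lemma bounded_rv_traj_A'[intro!]: "bounded_rv (\<lambda>\<omega>. traj A' x0 t \<omega> $ i)"
proof -
  have [measurable]: "(\<lambda>\<omega>. traj A' x0 t \<omega>) \<in> borel_measurable M"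
    by (rule measurable_traj[OF measurable_A'])
  show ?thesis by (rule bounded_rvI[OF _ traj_A'_bound]) measurable
qed

lemma bounded_rv_lyap_traj: "bounded_rv (\<lambda>\<omega>. lyap \<gamma> c \<kappa> (traj A' x0 t \<omega>))"
  unfolding lyap_def by auto

text \<open>Since A'(t) is independent of A'(0), ..., A'(t-1), which determine x(t), the
  one-step estimate applies conditionally on the past.\<close>

lemma expected_lyap_step:
  "integral\<^sup>L M (\<lambda>\<omega>. lyap \<gamma> c \<kappa> (traj A' x0 (Suc t) \<omega>)) \<le> integral\<^sup>L M (\<lambda>\<omega>. lyap \<gamma> c \<kappa> (traj A' x0 t \<omega>))"
proof -
  let ?N = "PiM {..<t} (\<lambda>_. borel) :: (nat \<Rightarrow> real^'n^'n) measure"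
  let ?K = "PiM {t} (\<lambda>_. borel) :: (nat \<Rightarrow> real^'n^'n) measure"
  let ?past = "\<lambda>\<omega>. restrict (\<lambda>i. A' i \<omega>) {..<t}"
  let ?now = "\<lambda>\<omega>. restrict (\<lambda>i. A' i \<omega>) {t}"
  define f where "f p = lyap \<gamma> c \<kappa> (traj_of_seq x0 t (fst p) - lap (snd p t) *v traj_of_seq x0 t (fst p))" for p
  define g where "g r = lyap \<gamma> c \<kappa> (traj_of_seq x0 t r)" for r
  have [measurable]: "traj_of_seq x0 t \<in> borel_measurable ?N" by (rule measurable_traj_of_seq) simp
  have [measurable]: "(\<lambda>r. r t) \<in> measurable ?K (borel :: (real^'n^'n) measure)"
    by (intro measurable_component_singleton) auto
  have past: "traj_of_seq x0 t (?past \<omega>) = traj A' x0 t \<omega>" for \<omega>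
    unfolding traj_of_seq_def by (rule traj_cong) simp
  have f_eq: "f (?past \<omega>, ?now \<omega>) = lyap \<gamma> c \<kappa> (traj A' x0 (Suc t) \<omega>)" for \<omega>
    by (simp add: f_def past)
  have g_eq: "g (?past \<omega>) = lyap \<gamma> c \<kappa> (traj A' x0 t \<omega>)" for \<omega>
    by (simp add: g_def past)
  have "integral\<^sup>L M (\<lambda>\<omega>. f (?past \<omega>, ?now \<omega>)) \<le> integral\<^sup>L M (\<lambda>\<omega>. g (?past \<omega>))"
  proof (rule independent_expectation_mono[where X="?past" and Y="?now"])
    show "indep_var ?N ?past ?K ?now" by (rule indep_var_restrict[OF indep_A']) auto
    show "f \<in> borel_measurable (?N \<Otimes>\<^sub>M ?K)" "g \<in> borel_measurable ?N"
      unfolding f_def[abs_def] g_def[abs_def] by measurable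
    show "integrable M (\<lambda>\<omega>. f (?past \<omega>, ?now \<omega>))" "integrable M (\<lambda>\<omega>. g (?past \<omega>))"
      unfolding f_eq g_eq by (intro bounded_rv_integrable bounded_rv_lyap_traj)+
    show "integral\<^sup>L M (\<lambda>\<omega>. f (r, ?now \<omega>)) \<le> g r" for r
      unfolding f_def g_def by simp (rule lyap_step)
  qed
  then show ?thesis unfolding f_eq g_eq .
qed

lemma expected_lyap_le_initial: "integral\<^sup>L M (\<lambda>\<omega>. lyap \<gamma> c \<kappa> (traj A' x0 t \<omega>)) \<le> lyap \<gamma> c \<kappa> x0"
proof (induction t)
  case 0 then show ?case by (simp add: prob_space)
next
  case (Suc t) then show ?case using expected_lyap_step[of c \<kappa> x0 t] by linarith
qed

lemma mean_square_deviation_eq: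
  "integral\<^sup>L M (\<lambda>\<omega>. (avg (traj A x0 t \<omega>) - avg x0)^2)
     = integral\<^sup>L M (\<lambda>\<omega>. ((\<Sum>i\<in>UNIV. traj A' x0 t \<omega> $ i) - (\<Sum>i\<in>UNIV. x0 $ i))^2) / (real CARD('n))^2"
proof -
  have [measurable]: "(\<lambda>\<omega>. traj A x0 t \<omega>) \<in> borel_measurable M" "(\<lambda>\<omega>. traj A' x0 t \<omega>) \<in> borel_measurable M"
    by (intro measurable_traj measurable_A measurable_A')+
  have "AE \<omega> in M. \<forall>s. A' s \<omega> = A s \<omega>"
    unfolding AE_all_countable using AE_A'_eq by blast
  then have "AE \<omega> in M. traj A x0 t \<omega> = traj A' x0 t \<omega>"
    by eventually_elim (intro traj_cong, simp)
  then have "integral\<^sup>L M (\<lambda>\<omega>. (avg (traj A x0 t \<omega>) - avg x0)^2)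
      = integral\<^sup>L M (\<lambda>\<omega>. (avg (traj A' x0 t \<omega>) - avg x0)^2)"
    by (intro integral_cong_AE) (auto elim: eventually_mono simp: avg_def)
  then show ?thesis
    by (simp add: avg_def power_divide flip: diff_divide_distrib)
qed

lemma mean_square_deviation_bound:
  "integral\<^sup>L M (\<lambda>\<omega>. (avg (traj A x0 t \<omega>) - avg x0)^2)
     \<le> (armax / \<alpha>) / (real CARD('n) + armax / \<alpha>) * Var x0"
proof -
  define N where "N = real CARD('n)"
  define c where "c = (\<Sum>i\<in>UNIV. x0 $ i)"
  define Q where "Q = (\<Sum>i\<in>UNIV. x0 $ i * x0 $ i)"
  define I where "I = integral\<^sup>L M (\<lambda>\<omega>. ((\<Sum>i\<in>UNIV. traj A' x0 t \<omega> $ i) - c)^2)"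
  define W :: "real^'n \<Rightarrow> real" where "W = lyap \<gamma> c (- 2 * c * \<gamma> / N)"
  have int: "integrable M (\<lambda>\<omega>. ((\<Sum>i\<in>UNIV. traj A' x0 t \<omega> $ i) - c)^2)"
    by (intro bounded_rv_integrable) auto
  have "(1 + \<gamma> / N) * I + \<gamma> * c^2 / N
      = integral\<^sup>L M (\<lambda>\<omega>. (1 + \<gamma> / N) * ((\<Sum>i\<in>UNIV. traj A' x0 t \<omega> $ i) - c)^2 + \<gamma> * c^2 / N)"
    using int by (simp add: I_def prob_space)
  also have "\<dots> \<le> integral\<^sup>L M (\<lambda>\<omega>. W (traj A' x0 t \<omega>))"
    using gamma_pos unfolding W_def N_def
    by (intro integral_mono lyap_lower_bound)
       (auto intro!: bounded_rv_integrable bounded_rv_lyap_traj simp: int)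
  also have "\<dots> \<le> W x0" unfolding W_def by (rule expected_lyap_le_initial)
  also have "\<dots> = \<gamma> * Q" by (simp add: W_def lyap_def c_def Q_def)
  finally have "I / N^2 \<le> \<gamma> / (N + \<gamma>) * ((Q - c^2 / N) / N)"
    by (intro consensus_arithmetic gamma_pos) (simp_all add: N_def)
  then show ?thesis
    by (simp add: mean_square_deviation_eq Var_expand I_def N_def c_def Q_def \<gamma>_def)
qed

end
theorem theorem4:
  fixes M :: "'a measure"
    and A :: "nat \<Rightarrow> 'a \<Rightarrow> real^'n^'n"
    and x0 :: "real^'n"
    and armax \<alpha> :: real
  assumes "prob_space M"
    and meas: "\<And>t. A t \<in> borel_measurable M"
    and indep: "prob_space.indep_vars M (\<lambda>_. borel) A UNIV"
    and ident: "\<And>t. distr M borel (A t) = distr M borel (A 0)"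
    and nonneg: "\<And>t. AE \<omega> in M. \<forall>i j. A t \<omega> $ i $ j \<ge> 0"
    and stoch: "\<And>t. AE \<omega> in M. \<forall>i. (\<Sum>j\<in>UNIV. A t \<omega> $ i $ j) = 1"
    and colsum: "\<And>t. ones v* (integral\<^sup>L M (\<lambda>\<omega>. lap (A t \<omega>))) = 0"
    and armax_pos: "armax > 0" and alpha_pos: "\<alpha> > 0"
    and rowbound: "\<And>t. AE \<omega> in M. \<forall>i. (\<Sum>j\<in>UNIV - {i}. A t \<omega> $ i $ j) \<le> armax"
    and diagbound: "\<And>t. AE \<omega> in M. \<forall>i. A t \<omega> $ i $ i \<ge> \<alpha>"
    and uncorr: "\<And>t i j k l. i \<noteq> k \<Longrightarrow>
        integral\<^sup>L M (\<lambda>\<omega>. A t \<omega> $ i $ j * A t \<omega> $ k $ l)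
          = integral\<^sup>L M (\<lambda>\<omega>. A t \<omega> $ i $ j) * integral\<^sup>L M (\<lambda>\<omega>. A t \<omega> $ k $ l)"
  shows "(\<forall>t. loewner_le
            (integral\<^sup>L M (\<lambda>\<omega>. transpose (lap (A t \<omega>)) ** ones_outer ** lap (A t \<omega>)))
            ((armax / \<alpha>) *\<^sub>R integral\<^sup>L M (\<lambda>\<omega>. lap (A t \<omega>) + transpose (lap (A t \<omega>))
                  - transpose (lap (A t \<omega>)) ** lap (A t \<omega>))))
       \<and> (\<forall>t. integral\<^sup>L M (\<lambda>\<omega>. (avg (traj A x0 t \<omega>) - avg x0)^2)
              \<le> (armax / \<alpha>) / (real CARD('n) + armax / \<alpha>) * Var x0)"
proof -
  interpret consensus_model M A armax \<alpha>
    using assms(1) meas indep nonneg stoch colsum armax_pos alpha_pos rowbound diagbound uncorr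
    by (simp add: consensus_model_def consensus_model_axioms_def)
  show ?thesis using loewner_inequality mean_square_deviation_bound by blast
qed

end
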